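(* Let $\mathbf{u}=(u_n)$ be an a-sequence whose sequence of ratios $(q_n)$ is unbounded. Then $s_\mathbf{u}(\mathbb{T})=\{x\in\mathbb{T}: u_nx\to0\text{ in }\mathbb{T}\}$ is not an $F_\sigma$-subset of $\mathbb{T}$.
   Context: An a-sequence is a strictly increasing sequence of integers $\mathbf{u}=(u_n)_{n\in\mathbb{N}}$ with $u_n\mid u_{n+1}$ for all $n$; its ratios are $q_0=u_0$ and $q_n=u_n/u_{n-1}$ for $n>0$. $\mathbb{T}=\mathbb{R}/\mathbb{Z}$ with its usual compact topology. *)

theory Defs
  imports "HOL-Analysis.Analysis"
begin

definition a_sequence :: "(nat \<Rightarrow> int) \<Rightarrow> bool" where
  "a_sequence u \<longleftrightarrow> strict_mono u \<and> (\<forall>n. u n dvd u (Suc n))"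

definition ratios :: "(nat \<Rightarrow> int) \<Rightarrow> nat \<Rightarrow> int" where
  "ratios u n = (if n = 0 then u 0 else u n div u (n - 1))"

text \<open>The circle group T = R/Z, realised (homeomorphically, as a topological group)
  as the unit circle in the complex plane via the quotient map x mod 1 to exp(2 pi i x).\<close>
definition torus_map :: "real \<Rightarrow> complex" where
  "torus_map x = exp (2 * of_real pi * \<i> * of_real x)"

definition torus :: "complex set" where
  "torus = sphere 0 1"

definition torus_top :: "complex topology" where
  "torus_top = top_of_set torus"

definition s_u :: "(nat \<Rightarrow> int) \<Rightarrow> complex set" where
  "s_u u = {torus_map x | x. (\<lambda>n. torus_map (real_of_int (u n) * x)) \<longlonglongrightarrow> torus_map 0}"

end

theory Submission
  imports Defs
begin

text \<open>
  Choose block indices \<open>N 0 < N 1 < ...\<close> at which the ratios \<open>q (N j)\<close> are large and between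
  which \<open>u\<close> grows a lot. To a level sequence \<open>lev\<close> attach the point
  \<open>x lev = \<Sum>j. (q (N j) div (lev j + 3)) / u (N j)\<close>. For \<open>N j \<le> n < N (j + 1)\<close> the summands
  up to \<open>j\<close> make \<open>u n * x lev\<close> an integer and the summands beyond \<open>j + 1\<close> are negligible, so
  modulo 1 the number \<open>u n * x lev\<close> lies in \<open>[0, 1 / (lev (j + 1) + 3)]\<close> up to a tiny error, and
  it is close to \<open>1 / (lev (j + 1) + 3)\<close> for \<open>n = N (j + 1) - 1\<close>. Hence \<open>x lev\<close> lies in \<open>s_u\<close>
  when \<open>lev\<close> tends to infinity and not when \<open>lev\<close> is eventually constant, while \<open>lev \<mapsto> x lev\<close>
  is continuous on the Baire space. A diagonal argument shows that a set separating these two kinds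
  of sequences along a continuous map is never a countable union of closed sets.
\<close>

section \<open>The circle\<close>

lemma torus_map_add: "torus_map (a + b) = torus_map a * torus_map b"
  unfolding torus_map_def by (simp add: distrib_left exp_add)

lemma torus_map_of_int [simp]: "torus_map (of_int k) = 1"
  unfolding torus_map_def using exp_2pi_1_int[of k] by (simp add: mult_ac)

lemma torus_map_0 [simp]: "torus_map 0 = 1"
  using torus_map_of_int[of 0] by simp

lemma torus_map_add_of_int [simp]: "torus_map (t + of_int k) = torus_map t"
  by (simp add: torus_map_add)

lemma torus_map_eq_imp_int_diff:
  assumes "torus_map a = torus_map b"
  shows "\<exists>k::int. a = b + of_int k"
proof -
  obtain k :: int where "2 * of_real pi * \<i> * of_real a
      = 2 * of_real pi * \<i> * of_real b + of_real (of_int (2 * k) * pi) * \<i>"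
    using assms unfolding torus_map_def exp_eq by blast
  then have "2 * pi * a = 2 * pi * (b + of_int k)"
    by (drule_tac arg_cong[where f = Im]) (simp add: algebra_simps)
  then show ?thesis by auto
qed

lemma Re_torus_map: "Re (torus_map t) = cos (2 * pi * t)"
  unfolding torus_map_def by (simp add: Re_exp)

lemma Re_torus_map_le_cos:
  assumes "0 \<le> d" "d \<le> t" "t \<le> 1/2"
  shows "Re (torus_map t) \<le> cos (2 * pi * d)"
proof -
  have "pi * (2 * d) \<le> pi * (2 * t)" "pi * (2 * t) \<le> pi * 1"
    using assms by (intro mult_left_mono; simp)+
  then show ?thesis
    unfolding Re_torus_map using assms(1) by (intro cos_monotone_0_pi_le) (auto simp: mult_ac)
qed

lemma isCont_torus_map: "isCont torus_map t"
  unfolding torus_map_def by (intro continuous_intros)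

lemma closed_torus: "closed torus"
  by (simp add: torus_def)

lemma mem_s_u_iff: "torus_map x \<in> s_u u \<longleftrightarrow> (\<lambda>n. torus_map (of_int (u n) * x)) \<longlonglongrightarrow> 1"
proof
  assume "torus_map x \<in> s_u u"
  then obtain y where xy: "torus_map x = torus_map y"
    and lim: "(\<lambda>n. torus_map (of_int (u n) * y)) \<longlonglongrightarrow> 1"
    unfolding s_u_def by auto
  obtain k :: int where "x = y + of_int k" using torus_map_eq_imp_int_diff[OF xy] by blast
  then have "torus_map (of_int (u n) * x) = torus_map (of_int (u n) * y)" for n
    using torus_map_add_of_int[of "of_int (u n) * y" "u n * k"] by (simp add: algebra_simps)
  then show "(\<lambda>n. torus_map (of_int (u n) * x)) \<longlonglongrightarrow> 1"
    using lim by simp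
qed (auto simp: s_u_def)

section \<open>a-sequences\<close>

lemma a_sequence_dvd:
  assumes "a_sequence u" "m \<le> n"
  shows "u m dvd u n"
  using assms(2)
proof (induction n rule: dec_induct)
  case (step n)
  then show ?case using assms(1) dvd_trans unfolding a_sequence_def by blast
qed simp

lemma a_sequence_pos:
  assumes "a_sequence u" "0 < n"
  shows "0 < u n"
proof -
  have mono: "strict_mono u" and dvd: "\<And>n. u n dvd u (Suc n)"
    using assms(1) unfolding a_sequence_def by auto
  have nonzero: "u m \<noteq> 0" for m
    using dvd[of m] strict_monoD[OF mono, of m "Suc m"] by auto
  have "0 < u 1"
  proof (rule ccontr)
    assume "\<not> 0 < u 1"
    then have "u 0 < u 1" "u 1 < 0"
      using nonzero[of 1] strict_monoD[OF mono, of 0 1] by auto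
    moreover obtain k where k: "u 1 = u 0 * k"
      using dvd[of 0] by auto
    ultimately have "u 0 < 0" "0 < k"
      by (auto simp: mult_less_0_iff)
    then have "u 0 * k \<le> u 0 * 1"
      by (intro mult_left_mono_neg) auto
    with k \<open>u 0 < u 1\<close> show False by simp
  qed
  moreover have "u 1 \<le> u n"
    using assms(2) mono by (simp add: strict_mono_less_eq)
  ultimately show ?thesis by simp
qed

lemma a_sequence_ratios_Suc:
  assumes "a_sequence u"
  shows "u (Suc n) = ratios u (Suc n) * u n"
  using a_sequence_dvd[OF assms, of n "Suc n"] by (simp add: ratios_def)

lemma a_sequence_ratios_gt_1:
  assumes "a_sequence u" "0 < n"
  shows "1 < ratios u (Suc n)"
proof -
  have "u n < u (Suc n)"
    using assms(1) unfolding a_sequence_def by (simp add: strict_monoD)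
  then have "1 * u n < ratios u (Suc n) * u n"
    using a_sequence_ratios_Suc[OF assms(1), of n] by simp
  then show ?thesis
    using a_sequence_pos[OF assms] mult_less_cancel_right_pos by blast
qed

lemma a_sequence_double:
  assumes "a_sequence u" "0 < n"
  shows "2 * u n \<le> u (Suc n)"
  using a_sequence_ratios_Suc[OF assms(1), of n] a_sequence_ratios_gt_1[OF assms]
    a_sequence_pos[OF assms] by simp

lemma a_sequence_power_le:
  assumes "a_sequence u" "0 < n"
  shows "2 ^ k * u n \<le> u (n + k)"
proof (induction k)
  case (Suc k)
  then show ?case
    using a_sequence_double[OF assms(1), of "n + k"] assms(2) by simp
qed simp

lemma unbounded_exists_beyond:
  fixes q :: "nat \<Rightarrow> int"
  assumes "\<forall>B. \<exists>n. \<bar>q n\<bar> > B"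
  shows "\<exists>n\<ge>M. B < \<bar>q n\<bar>"
proof -
  obtain n where n: "max B (Max ((\<lambda>n. \<bar>q n\<bar>) ` {..<M})) < \<bar>q n\<bar>"
    using assms by blast
  then have "\<not> n < M"
    by (metis (no_types, lifting) Max_ge finite_imageI finite_lessThan image_eqI leD lessThan_iff max.strict_boundedE)
  moreover have "B < \<bar>q n\<bar>"
    using n by simp
  ultimately show ?thesis
    using not_less by blast
qed

lemma geometric_tail_bound:
  fixes a :: "nat \<Rightarrow> real"
  assumes "\<And>i. \<bar>a i\<bar> \<le> (1/2) ^ (i + c + 1)"
  shows "summable a" and "\<bar>suminf a\<bar> \<le> (1/2) ^ c"
proof -
  have "(\<lambda>i. (1/2) ^ (c + 1) * (1/2) ^ i) sums ((1/2) ^ (c + 1) * (1 / (1 - 1/2 :: real)))"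
    by (intro sums_mult geometric_sums) simp
  then have geom: "(\<lambda>i. (1/2) ^ (i + c + 1)) sums ((1/2 :: real) ^ c)"
    by (simp add: power_add mult_ac)
  have abs: "summable (\<lambda>i. \<bar>a i\<bar>)"
    using assms by (intro summable_comparison_test[OF _ sums_summable[OF geom]]) auto
  then show "summable a"
    by (rule summable_rabs_cancel)
  have "\<bar>suminf a\<bar> \<le> (\<Sum>i. \<bar>a i\<bar>)"
    by (rule summable_rabs[OF abs])
  also have "\<dots> \<le> (1/2) ^ c"
    using suminf_le[OF assms abs sums_summable[OF geom]] sums_unique[OF geom] by simp
  finally show "\<bar>suminf a\<bar> \<le> (1/2) ^ c" .
qed

lemma of_int_div_divide_bounds:
  fixes q m :: int
  assumes "0 < q" "0 < m"
  shows "of_int (q div m) / of_int q \<le> 1 / (of_int m :: real)"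
    and "1 / of_int m - 1 / of_int q \<le> of_int (q div m) / (of_int q :: real)"
proof -
  define d where "d = real_of_int (q div m)"
  have "q div m * m \<le> q" "q < (q div m + 1) * m"
    using assms(2) by (auto simp: distrib_right) (metis add.commute div_mult_mod_eq le_add_same_cancel2 pos_mod_sign,
      metis add.commute div_mult_mod_eq pos_mod_bound add_less_cancel_left)
  then have lower: "d * of_int m \<le> of_int q" and upper: "of_int q - of_int m < d * of_int m"
    unfolding d_def by (metis of_int_le_iff of_int_mult, simp add: distrib_right flip: of_int_mult of_int_less_iff)
  from lower assms show "d / of_int q \<le> 1 / of_int m"
    by (simp add: field_simps)
  have "1 / of_int m - 1 / of_int q = (of_int q - of_int m) / (of_int m * of_int q :: real)"
    using assms by (simp add: field_simps)
  also have "\<dots> \<le> d * of_int m / (of_int m * of_int q)"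
    using upper assms by (intro divide_right_mono) auto
  also have "\<dots> = d / of_int q"
    using assms by simp
  finally show "1 / of_int m - 1 / of_int q \<le> d / of_int q" .
qed

section \<open>A criterion for not being \<open>F\<^sub>\<sigma>\<close>\<close>

lemma diagonal_level_sequence:
  fixes L :: "nat \<Rightarrow> nat \<Rightarrow> nat" and J :: "nat \<Rightarrow> nat"
  assumes "strict_mono J"
    and L_const: "\<And>k j. J k < j \<Longrightarrow> L k j = k"
    and L_Suc: "\<And>k j. j \<le> J (Suc k) \<Longrightarrow> L (Suc k) j = L k j"
  shows "\<And>k j. j \<le> J (Suc k) \<Longrightarrow> L (Suc j) j = L k j"
    and "filterlim (\<lambda>j. L (Suc j) j) at_top sequentially"
proof -
  have J_mono: "a \<le> b \<Longrightarrow> J a \<le> J b" and J_ge: "k \<le> J k" for a b k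
    using assms(1) by (simp_all add: strict_mono_less_eq strict_mono_imp_increasing)
  have L_stable: "L b j = L a j" if "a \<le> b" "j \<le> J a" for a b j
    using that(1)
  proof (induction b rule: dec_induct)
    case (step b)
    then show ?case using L_Suc[of j b] J_mono[of a "Suc b"] that(2) by simp
  qed simp
  show "L (Suc j) j = L k j" if "j \<le> J (Suc k)" for k j
  proof -
    have "L (Suc j) j = L (max (Suc j) (Suc k)) j"
      using J_ge[of "Suc j"] by (intro L_stable[symmetric]) auto
    also have "\<dots> = L k j"
      using L_stable[of "Suc k" _ j] that L_Suc[OF that] by simp
    finally show ?thesis .
  qed
  have "K \<le> L (Suc j) j" if "J K < j" for K j
  proof -
    have "K \<le> L b j" if "K \<le> b" for b
      using that
    proof (induction b rule: dec_induct)
      case base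
      then show ?case using L_const[OF \<open>J K < j\<close>] by simp
    next
      case (step b)
      then show ?case using L_Suc[of j b] L_const[of "Suc b" j] by (cases "j \<le> J (Suc b)") auto
    qed
    then show ?thesis using J_ge[of K] that by simp
  qed
  then show "filterlim (\<lambda>j. L (Suc j) j) at_top sequentially"
    unfolding filterlim_at_top eventually_sequentially by (meson Suc_le_eq)
qed

text \<open>
  The first hypothesis is continuity of \<open>\<Phi>\<close> on the Baire space (\<open>\<nat>\<^sup>\<nat>\<close> with the product of
  discrete topologies). Level sequences \<open>L\<^sub>k\<close>, equal to \<open>k\<close> beyond \<open>J\<^sub>k\<close>, are chosen so that every
  sequence agreeing with \<open>L\<^sub>k\<close> up to \<open>J\<^sub>k\<^sub>+\<^sub>1\<close> is mapped outside \<open>C\<^sub>k\<close>; their diagonal limit tends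
  to infinity but avoids every \<open>C\<^sub>k\<close>.
\<close>
lemma Union_range_closed_neq:
  fixes \<Phi> :: "(nat \<Rightarrow> nat) \<Rightarrow> 'a::topological_space" and C :: "nat \<Rightarrow> 'a set"
  assumes continuous:
      "\<And>f U. open U \<Longrightarrow> \<Phi> f \<in> U \<Longrightarrow> \<exists>m. \<forall>g. (\<forall>i\<le>m. g i = f i) \<longrightarrow> \<Phi> g \<in> U"
    and tendsto_infinity: "\<And>f. filterlim f at_top sequentially \<Longrightarrow> \<Phi> f \<in> S"
    and eventually_const: "\<And>f k. (\<forall>\<^sub>F j in sequentially. f j = k) \<Longrightarrow> \<Phi> f \<notin> S"
    and closed: "\<And>k. closed (C k)"
  shows "\<Union> (range C) \<noteq> S"
proof
  assume union: "\<Union> (range C) = S"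
  define P where "P k s \<longleftrightarrow> (\<forall>j>snd s. fst s j = k)" for k :: nat and s :: "(nat \<Rightarrow> nat) \<times> nat"
  define Q where "Q k s s' \<longleftrightarrow> snd s < snd s' \<and> (\<forall>j\<le>snd s'. fst s' j = fst s j)
      \<and> (\<forall>g. (\<forall>j\<le>snd s'. g j = fst s j) \<longrightarrow> \<Phi> g \<notin> C k)"
    for k :: nat and s s' :: "(nat \<Rightarrow> nat) \<times> nat"
  have "\<exists>s'. P (Suc k) s' \<and> Q k s s'" if "P k s" for k s
  proof -
    obtain L J where s: "s = (L, J)" by fastforce
    have "\<Phi> L \<notin> S"
      using that by (intro eventually_const[of L k]) (auto simp: s P_def eventually_sequentially intro: exI[of _ "Suc J"])
    then have "\<Phi> L \<in> - C k" using union by blast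
    then obtain m where m: "\<And>g. \<forall>i\<le>m. g i = L i \<Longrightarrow> \<Phi> g \<notin> C k"
      using continuous[of "- C k" L] closed[of k] by blast
    define J' where "J' = max (Suc J) m"
    define L' where "L' j = (if j \<le> J' then L j else Suc k)" for j
    have "P (Suc k) (L', J') \<and> Q k s (L', J')"
      unfolding P_def Q_def s using m by (auto simp: L'_def J'_def)
    then show ?thesis by blast
  qed
  moreover have "P 0 (\<lambda>_. 0, 0)" by (simp add: P_def)
  ultimately obtain s where s: "\<And>k. P k (s k) \<and> Q k (s k) (s (Suc k))"
    using dependent_nat_choice[of P Q] by blast
  define L where "L k = fst (s k)" for k
  define J where "J k = snd (s k)" for k
  have J: "strict_mono J"
    using s by (simp add: strict_mono_Suc_iff Q_def J_def)
  have L_const: "J k < j \<Longrightarrow> L k j = k" for k j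
    using s[of k] by (simp add: P_def L_def J_def)
  have L_Suc: "j \<le> J (Suc k) \<Longrightarrow> L (Suc k) j = L k j" for k j
    using s[of k] by (simp add: Q_def L_def J_def)
  note diagonal = diagonal_level_sequence[of J L, OF J L_const L_Suc]
  have "\<Phi> (\<lambda>j. L (Suc j) j) \<notin> C k" for k
  proof -
    have "\<forall>g. (\<forall>j\<le>J (Suc k). g j = L k j) \<longrightarrow> \<Phi> g \<notin> C k"
      using s[of k] by (simp add: Q_def L_def J_def)
    then have "(\<forall>j\<le>J (Suc k). L (Suc j) j = L k j) \<longrightarrow> \<Phi> (\<lambda>j. L (Suc j) j) \<notin> C k"
      by (rule spec[where x = "\<lambda>j. L (Suc j) j"])
    moreover have "\<forall>j\<le>J (Suc k). L (Suc j) j = L k j"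
      using diagonal(1) by blast
    ultimately show ?thesis
      by blast
  qed
  then show False
    using tendsto_infinity[OF diagonal(2)] union by blast
qed

section \<open>The points attached to level sequences\<close>

lemma level_bound_tendsto_0:
  fixes lev :: "nat \<Rightarrow> nat"
  assumes "filterlim lev at_top sequentially"
  shows "(\<lambda>j. 1 / (real (lev (Suc j)) + 3) + (1/2) ^ (j + 5)) \<longlonglongrightarrow> 0"
proof -
  have "filterlim (\<lambda>j. lev (Suc j)) at_top sequentially"
    using assms by (rule filterlim_sequentially_Suc[THEN iffD2])
  then have "filterlim (\<lambda>j. real (lev (Suc j))) at_top sequentially"
    by (rule filterlim_compose[OF filterlim_real_sequentially])
  then have "filterlim (\<lambda>j. 3 + real (lev (Suc j))) at_top sequentially"
    by (rule filterlim_tendsto_add_at_top[OF tendsto_const])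
  then have "(\<lambda>j. inverse (3 + real (lev (Suc j)))) \<longlonglongrightarrow> 0"
    by (rule tendsto_inverse_0_at_top)
  then have "(\<lambda>j. 1 / (real (lev (Suc j)) + 3)) \<longlonglongrightarrow> 0"
    by (simp add: inverse_eq_divide add.commute)
  moreover have "(\<lambda>j. (1/2::real) ^ (j + 5)) \<longlonglongrightarrow> 0"
    by (rule LIMSEQ_ignore_initial_segment[OF LIMSEQ_power_zero]) simp
  ultimately show ?thesis
    by (rule tendsto_add_zero)
qed

lemma strict_mono_block_exists:
  fixes N :: "nat \<Rightarrow> nat"
  assumes "strict_mono N" "N 0 \<le> n"
  shows "\<exists>j. N j \<le> n \<and> n < N (Suc j)"
  using assms(2)
proof (induction n rule: dec_induct)
  case base
  then show ?case using strict_monoD[OF assms(1), of 0 1] by auto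
next
  case (step n)
  then obtain j where j: "N j \<le> n" "n < N (Suc j)" by blast
  show ?case
  proof (cases "Suc n = N (Suc j)")
    case True
    then show ?thesis using strict_monoD[OF assms(1), of "Suc j" "Suc (Suc j)"] by auto
  next
    case False
    then show ?thesis using j by (intro exI[of _ j]) auto
  qed
qed

lemma strict_mono_block_index:
  fixes N :: "nat \<Rightarrow> nat"
  assumes "strict_mono N"
  obtains blk where "\<And>n. N 0 \<le> n \<Longrightarrow> N (blk n) \<le> n \<and> n < N (Suc (blk n))"
    and "filterlim blk at_top sequentially"
proof -
  have "\<forall>n. \<exists>j. N 0 \<le> n \<longrightarrow> N j \<le> n \<and> n < N (Suc j)"
    using strict_mono_block_exists[OF assms] by blast
  then obtain blk where "\<forall>n. N 0 \<le> n \<longrightarrow> N (blk n) \<le> n \<and> n < N (Suc (blk n))"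
    by (rule choice[THEN exE])
  then have blk: "N 0 \<le> n \<Longrightarrow> N (blk n) \<le> n \<and> n < N (Suc (blk n))" for n
    by blast
  have "filterlim blk at_top sequentially"
    unfolding filterlim_at_top
  proof (intro allI eventually_sequentiallyI)
    fix K n
    assume "N K \<le> n"
    show "K \<le> blk n"
    proof (rule ccontr)
      assume "\<not> K \<le> blk n"
      then have "N (Suc (blk n)) \<le> N K" "N 0 \<le> N K"
        using assms by (simp_all add: strict_mono_less_eq)
      then show False
        using blk[of n] \<open>N K \<le> n\<close> by simp
    qed
  qed
  with blk show ?thesis
    using that by blast
qed

locale a_sequence_blocks =
  fixes u :: "nat \<Rightarrow> int" and N :: "nat \<Rightarrow> nat"
  assumes a_sequence: "a_sequence u"
    and strict_mono_N: "strict_mono N"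
    and N_0_ge: "2 \<le> N 0"
    and ratios_ge: "2 ^ j \<le> ratios u (N j)"
    and block_gap: "2 ^ (j + 4) * u (N j) \<le> u (N (Suc j) - 1)"
begin

text \<open>
  The shift by 3 makes the residue of \<open>u n * point lev\<close> modulo 1 at most \<open>1/3\<close> plus a small
  error, hence below \<open>1/2\<close>, where the real part of the circle map is monotone.
\<close>
definition digit :: "(nat \<Rightarrow> nat) \<Rightarrow> nat \<Rightarrow> int" where
  "digit lev j = ratios u (N j) div (int (lev j) + 3)"

definition summand :: "(nat \<Rightarrow> nat) \<Rightarrow> nat \<Rightarrow> real" where
  "summand lev j = of_int (digit lev j) / of_int (u (N j))"

definition point :: "(nat \<Rightarrow> nat) \<Rightarrow> real" where
  "point lev = (\<Sum>j. summand lev j)"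

lemma N_ge: "2 \<le> N j"
  using N_0_ge strict_mono_N by (metis le_trans strict_mono_less_eq zero_le)

lemma u_pos: "0 < n \<Longrightarrow> 0 < u n"
  by (rule a_sequence_pos[OF a_sequence])

lemma u_mono: "m \<le> n \<Longrightarrow> u m \<le> u n"
  using a_sequence unfolding a_sequence_def by (simp add: strict_mono_less_eq)

lemma ratios_N_pos: "0 < ratios u (N j)"
  by (rule less_le_trans[OF _ ratios_ge]) simp

lemma u_N_eq: "u (N j) = ratios u (N j) * u (N j - 1)"
  using a_sequence_ratios_Suc[OF a_sequence, of "N j - 1"] N_ge[of j] by simp

lemma summand_mult_pred: "summand lev j * of_int (u (N j - 1)) = of_int (digit lev j) / of_int (ratios u (N j))"
  using u_pos[of "N j - 1"] N_ge[of j] unfolding summand_def u_N_eq by simp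

lemma summand_nonneg: "0 \<le> summand lev j"
  using ratios_N_pos[of j] u_pos[of "N j"] N_ge[of j]
  by (simp add: summand_def digit_def pos_imp_zdiv_nonneg_iff)

lemma digit_divide_ratios_le: "of_int (digit lev j) / of_int (ratios u (N j)) \<le> 1 / (real (lev j) + 3)"
  using of_int_div_divide_bounds(1)[OF ratios_N_pos[of j], of "int (lev j) + 3"] by (simp add: digit_def)

lemma summand_mult_le_level:
  assumes "0 \<le> w" "w \<le> of_int (u (N j - 1))"
  shows "summand lev j * w \<le> 1 / (real (lev j) + 3)"
proof -
  have "summand lev j * w \<le> summand lev j * of_int (u (N j - 1))"
    using assms summand_nonneg by (intro mult_left_mono) auto
  also have "\<dots> \<le> 1 / (real (lev j) + 3)"
    using digit_divide_ratios_le summand_mult_pred by simp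
  finally show ?thesis .
qed

lemma summand_mult_pred_ge: "1 / (real (lev j) + 3) - (1/2) ^ j \<le> summand lev j * of_int (u (N j - 1))"
proof -
  have "1 / (of_int (ratios u (N j)) :: real) \<le> (1/2) ^ j"
  proof -
    have "(2::real) ^ j \<le> of_int (ratios u (N j))"
      using ratios_ge[of j] by (metis of_int_le_iff of_int_numeral of_int_power)
    then show ?thesis
      unfolding power_one_over by (intro frac_le) auto
  qed
  moreover have "1 / (real (lev j) + 3) - 1 / of_int (ratios u (N j))
      \<le> of_int (digit lev j) / of_int (ratios u (N j))"
    using of_int_div_divide_bounds(2)[OF ratios_N_pos[of j], of "int (lev j) + 3"]
    by (simp add: digit_def)
  ultimately show ?thesis
    using summand_mult_pred[of lev j] by linarith
qed

lemma summand_Suc_mult_le: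
  assumes "0 \<le> w" "w \<le> of_int (u (N j))"
  shows "summand lev (Suc j) * w \<le> (1/2) ^ (j + 5)"
proof -
  define P where "P = real_of_int (u (N (Suc j) - 1))"
  have "0 < P"
    unfolding P_def using u_pos N_ge[of "Suc j"] by simp
  have "2 ^ (j + 4) * w \<le> 2 ^ (j + 4) * of_int (u (N j))"
    using assms(2) by simp
  also have "\<dots> \<le> P"
    using block_gap[of j] unfolding P_def by (metis of_int_le_iff of_int_mult of_int_numeral of_int_power)
  finally have "2 ^ (j + 4) * w \<le> P" .
  then have "w / P \<le> (1/2) ^ (j + 4)"
    using \<open>0 < P\<close> by (simp add: field_simps)
  moreover have "summand lev (Suc j) * P \<le> 1/2"
  proof -
    have "1 / (real (lev (Suc j)) + 3) \<le> 1/2"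
      by (intro frac_le) auto
    then show ?thesis
      using digit_divide_ratios_le[of lev "Suc j"] summand_mult_pred[of lev "Suc j"]
      unfolding P_def by linarith
  qed
  ultimately have "summand lev (Suc j) * P * (w / P) \<le> 1/2 * (1/2) ^ (j + 4)"
    using assms(1) \<open>0 < P\<close> summand_nonneg by (intro mult_mono) auto
  also have "\<dots> = (1/2) ^ (j + 5)"
    by (simp add: power_add power_one_over)
  finally show ?thesis
    using \<open>0 < P\<close> by simp
qed

lemma summand_Suc_le: "summand lev (Suc j) \<le> (1/2) ^ (j + 5)"
  using summand_Suc_mult_le[of 1 j lev] u_pos[of "N j"] N_ge[of j] by simp

lemma summable_summand: "summable (summand lev)"
proof -
  have "summable (\<lambda>j. summand lev (Suc j))"
  proof (rule geometric_tail_bound[where c = 4])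
    show "\<bar>summand lev (Suc j)\<bar> \<le> (1/2) ^ (j + 4 + 1)" for j
      using summand_Suc_le[of lev j] summand_nonneg[of lev "Suc j"] by (simp add: add.commute)
  qed
  then show ?thesis by (simp only: summable_Suc_iff)
qed

lemma point_close:
  assumes "\<forall>i\<le>m. f i = g i"
  shows "\<bar>point f - point g\<bar> \<le> (1/2) ^ (m + 4)"
proof -
  define h where "h i = summand f i - summand g i" for i
  have "summable h"
    unfolding h_def by (intro summable_diff summable_summand)
  have "point f - point g = suminf h"
    unfolding point_def h_def by (intro suminf_diff summable_summand)
  also have "\<dots> = (\<Sum>i. h (i + Suc m)) + (\<Sum>i<Suc m. h i)"
    by (rule suminf_split_initial_segment[OF \<open>summable h\<close>])
  also have "(\<Sum>i<Suc m. h i) = 0"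
    unfolding h_def summand_def digit_def using assms by (intro sum.neutral) auto
  finally have "point f - point g = (\<Sum>i. h (i + Suc m))"
    by simp
  also have "\<bar>\<dots>\<bar> \<le> (1/2) ^ (m + 4)"
  proof (rule geometric_tail_bound(2))
    show "\<bar>h (i + Suc m)\<bar> \<le> (1/2) ^ (i + (m + 4) + 1)" for i
      using summand_Suc_le[of f "i + m"] summand_Suc_le[of g "i + m"]
        summand_nonneg[of f "Suc (i + m)"] summand_nonneg[of g "Suc (i + m)"]
      unfolding h_def by (auto simp: add_ac abs_le_iff)
  qed
  finally show ?thesis .
qed

definition remainder :: "(nat \<Rightarrow> nat) \<Rightarrow> nat \<Rightarrow> nat \<Rightarrow> real" where
  "remainder lev n j = (\<Sum>i. summand lev (i + Suc j) * of_int (u n))"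

lemma torus_map_mult_point:
  assumes "N j \<le> n"
  shows "torus_map (of_int (u n) * point lev) = torus_map (remainder lev n j)"
proof -
  define f where "f i = summand lev i * of_int (u n)" for i
  have "summable f"
    unfolding f_def by (intro summable_mult2 summable_summand)
  have f_int: "f i = of_int (digit lev i * (u n div u (N i)))" if "i < Suc j" for i
  proof -
    have "N i \<le> n"
      using that assms strict_mono_N by (meson le_trans less_Suc_eq_le strict_mono_less_eq)
    then have "u (N i) dvd u n"
      by (rule a_sequence_dvd[OF a_sequence])
    moreover have "0 < u (N i)"
      using u_pos N_ge[of i] by simp
    ultimately show ?thesis
      unfolding f_def summand_def by (auto elim!: dvdE)
  qed
  have "of_int (u n) * point lev = suminf f"
    unfolding f_def point_def using suminf_mult2[OF summable_summand] by (simp add: mult.commute)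
  also have "\<dots> = (\<Sum>i. f (i + Suc j)) + (\<Sum>i<Suc j. f i)"
    by (rule suminf_split_initial_segment[OF \<open>summable f\<close>])
  also have "(\<Sum>i. f (i + Suc j)) = remainder lev n j"
    by (simp add: remainder_def f_def)
  also have "(\<Sum>i<Suc j. f i) = of_int (\<Sum>i<Suc j. digit lev i * (u n div u (N i)))"
    by (simp add: f_int)
  finally show ?thesis
    by (metis torus_map_add_of_int)
qed

lemma remainder_bounds:
  assumes "N j \<le> n" "n < N (Suc j)"
  shows "summand lev (Suc j) * of_int (u n) \<le> remainder lev n j"
    and "remainder lev n j \<le> summand lev (Suc j) * of_int (u n) + (1/2) ^ (j + 5)"
proof -
  define g where "g i = summand lev (i + Suc j) * of_int (u n)" for i
  have "0 < u n"
    using u_pos N_ge[of j] assms(1) by simp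
  have g_bound: "\<bar>g (Suc i)\<bar> \<le> (1/2) ^ (i + (j + 5) + 1)" for i
  proof -
    have "n \<le> N (i + Suc j)"
      using assms(2) strict_mono_N by (meson le_add2 less_imp_le order_trans strict_mono_less_eq)
    then have "summand lev (Suc (i + Suc j)) * of_int (u n) \<le> (1/2) ^ (i + Suc j + 5)"
      using \<open>0 < u n\<close> u_mono by (intro summand_Suc_mult_le) auto
    moreover have "0 \<le> summand lev (Suc (i + Suc j)) * of_int (u n)"
      using \<open>0 < u n\<close> summand_nonneg by simp
    ultimately show ?thesis
      unfolding g_def by simp
  qed
  have "summable g"
    using geometric_tail_bound(1)[OF g_bound] by (simp only: summable_Suc_iff)
  have "0 \<le> g i" for i
    unfolding g_def using \<open>0 < u n\<close> summand_nonneg by simp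
  have "remainder lev n j = g 0 + (\<Sum>i. g (Suc i))"
    using suminf_split_head[OF \<open>summable g\<close>] unfolding remainder_def g_def by simp
  moreover have "0 \<le> (\<Sum>i. g (Suc i))"
    using \<open>0 \<le> g _\<close> by (intro suminf_nonneg geometric_tail_bound(1)[OF g_bound])
  moreover have "(\<Sum>i. g (Suc i)) \<le> (1/2) ^ (j + 5)"
    using geometric_tail_bound(2)[OF g_bound] by simp
  moreover have "g 0 = summand lev (Suc j) * of_int (u n)"
    by (simp add: g_def)
  ultimately show "summand lev (Suc j) * of_int (u n) \<le> remainder lev n j"
    and "remainder lev n j \<le> summand lev (Suc j) * of_int (u n) + (1/2) ^ (j + 5)"
    by linarith+
qed

lemma remainder_le_level:
  assumes "N j \<le> n" "n < N (Suc j)"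
  shows "0 \<le> remainder lev n j"
    and "remainder lev n j \<le> 1 / (real (lev (Suc j)) + 3) + (1/2) ^ (j + 5)"
proof -
  have "0 < u n"
    using u_pos N_ge[of j] assms(1) by simp
  moreover have "u n \<le> u (N (Suc j) - 1)"
    using assms(2) by (intro u_mono) simp
  ultimately have "summand lev (Suc j) * of_int (u n) \<le> 1 / (real (lev (Suc j)) + 3)"
    by (intro summand_mult_le_level) auto
  moreover have "0 \<le> summand lev (Suc j) * of_int (u n)"
    using \<open>0 < u n\<close> summand_nonneg by simp
  ultimately show "0 \<le> remainder lev n j"
    and "remainder lev n j \<le> 1 / (real (lev (Suc j)) + 3) + (1/2) ^ (j + 5)"
    using remainder_bounds[OF assms, of lev] by linarith+
qed

lemma remainder_block_end_ge:
  "1 / (real (lev (Suc j)) + 3) - (1/2) ^ Suc j \<le> remainder lev (N (Suc j) - 1) j"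
proof -
  have "N j < N (Suc j)"
    using strict_mono_N by (simp add: strict_monoD)
  then have "N j \<le> N (Suc j) - 1" "N (Suc j) - 1 < N (Suc j)"
    by auto
  then show ?thesis
    using remainder_bounds(1)[of j "N (Suc j) - 1" lev] summand_mult_pred_ge[of lev "Suc j"]
    by simp
qed

lemma point_continuous:
  assumes "open V" "point f \<in> V"
  shows "\<exists>m. \<forall>g. (\<forall>i\<le>m. g i = f i) \<longrightarrow> point g \<in> V"
proof -
  obtain e where "0 < e" "ball (point f) e \<subseteq> V"
    using assms open_contains_ball by blast
  obtain m where m: "(1/2) ^ m < e"
    using real_arch_pow_inv[OF \<open>0 < e\<close>, of "1/2"] by auto
  have "(1/2::real) ^ (m + 4) \<le> (1/2) ^ m"
    by (intro power_decreasing) auto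
  then have "\<bar>point f - point g\<bar> < e" if "\<forall>i\<le>m. g i = f i" for g
    using point_close[OF that] m by linarith
  then have "point g \<in> ball (point f) e" if "\<forall>i\<le>m. g i = f i" for g
    using that by (simp add: dist_real_def)
  then show ?thesis
    using \<open>ball (point f) e \<subseteq> V\<close> by blast
qed

lemma torus_map_point_in_s_u:
  assumes "filterlim lev at_top sequentially"
  shows "torus_map (point lev) \<in> s_u u"
proof -
  obtain blk where blk: "\<And>n. N 0 \<le> n \<Longrightarrow> N (blk n) \<le> n \<and> n < N (Suc (blk n))"
    and "filterlim blk at_top sequentially"
    using strict_mono_block_index[OF strict_mono_N] by blast
  define R where "R n = remainder lev n (blk n)" for n
  define b where "b j = 1 / (real (lev (Suc j)) + 3) + (1/2) ^ (j + 5)" for j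
  have "b \<longlonglongrightarrow> 0"
    unfolding b_def using assms by (rule level_bound_tendsto_0)
  then have "(\<lambda>n. b (blk n)) \<longlonglongrightarrow> 0"
    using \<open>filterlim blk at_top sequentially\<close> by (rule filterlim_compose)
  moreover have "\<forall>\<^sub>F n in sequentially. 0 \<le> R n" "\<forall>\<^sub>F n in sequentially. R n \<le> b (blk n)"
    by (rule eventually_sequentiallyI[of "N 0"], use blk remainder_le_level in \<open>simp add: R_def b_def\<close>)+
  ultimately have "R \<longlonglongrightarrow> 0"
    by (rule tendsto_sandwich[OF _ _ tendsto_const, rotated 2])
  then have "(\<lambda>n. torus_map (R n)) \<longlonglongrightarrow> torus_map 0"
    by (rule isCont_tendsto_compose[OF isCont_torus_map])
  moreover have "\<forall>\<^sub>F n in sequentially. torus_map (R n) = torus_map (of_int (u n) * point lev)"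
  proof (rule eventually_sequentiallyI[of "N 0"])
    fix n
    assume "N 0 \<le> n"
    then show "torus_map (R n) = torus_map (of_int (u n) * point lev)"
      using torus_map_mult_point[of "blk n" n lev] blk unfolding R_def by simp
  qed
  ultimately have "(\<lambda>n. torus_map (of_int (u n) * point lev)) \<longlonglongrightarrow> torus_map 0"
    by (rule Lim_transform_eventually)
  then show ?thesis
    by (simp add: mem_s_u_iff)
qed

lemma torus_map_point_notin_s_u:
  assumes "\<forall>\<^sub>F j in sequentially. lev j = k"
  shows "torus_map (point lev) \<notin> s_u u"
proof
  assume "torus_map (point lev) \<in> s_u u"
  then have "(\<lambda>n. Re (torus_map (of_int (u n) * point lev))) \<longlonglongrightarrow> Re 1"
    unfolding mem_s_u_iff by (rule tendsto_Re)
  define \<delta> where "\<delta> = 1 / (2 * (real k + 3))"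
  have "0 < \<delta>" "\<delta> \<le> 1/2"
    unfolding \<delta>_def by (auto simp: field_simps)
  have "cos (2 * pi * \<delta>) < Re 1"
  proof -
    have "pi * (2 * \<delta>) \<le> pi * 1"
      using \<open>\<delta> \<le> 1/2\<close> by (intro mult_left_mono) auto
    then show ?thesis
      using \<open>0 < \<delta>\<close> cos_monotone_0_pi[of 0 "2 * pi * \<delta>"] by (simp add: mult_ac)
  qed
  then obtain M where M: "\<And>n. M \<le> n \<Longrightarrow> cos (2 * pi * \<delta>) < Re (torus_map (of_int (u n) * point lev))"
    using order_tendstoD(1)[OF \<open>(\<lambda>n. Re _) \<longlonglongrightarrow> Re 1\<close>] by (auto simp: eventually_sequentially)
  have "\<forall>\<^sub>F j in sequentially. lev (Suc j) = k"
    using assms by (rule eventually_sequentially_Suc[where P = "\<lambda>j. lev j = k", THEN iffD2])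
  moreover have "\<forall>\<^sub>F j in sequentially. (1/2) ^ j < \<delta>"
    using order_tendstoD(2)[OF LIMSEQ_power_zero \<open>0 < \<delta>\<close>] by simp
  moreover have "\<forall>\<^sub>F j in sequentially. M \<le> j"
    by simp
  ultimately have "\<forall>\<^sub>F j in sequentially. lev (Suc j) = k \<and> (1/2) ^ j < \<delta> \<and> M \<le> j"
    by eventually_elim blast
  then obtain j where j: "lev (Suc j) = k" "(1/2) ^ j < \<delta>" "M \<le> j"
    by (auto simp: eventually_sequentially)
  define n where "n = N (Suc j) - 1"
  have "N j < N (Suc j)"
    using strict_mono_N by (simp add: strict_monoD)
  then have "N j \<le> n" "n < N (Suc j)"
    unfolding n_def by auto
  have "1 / (real k + 3) = 2 * \<delta>"
    unfolding \<delta>_def by (simp add: field_simps)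
  moreover have "(1/2::real) ^ Suc j \<le> (1/2) ^ j"
    by simp
  moreover have "1 / (real k + 3) - (1/2) ^ Suc j \<le> remainder lev n j"
    using remainder_block_end_ge[of lev j] j(1) unfolding n_def by simp
  ultimately have "\<delta> \<le> remainder lev n j"
    using j(2) by linarith
  moreover have "remainder lev n j \<le> 1/2"
  proof -
    have "1 / (real k + 3) \<le> 1/3"
      by (intro frac_le) auto
    moreover have "(1/2::real) ^ (j + 5) \<le> (1/2) ^ 5"
      by (intro power_decreasing) auto
    moreover have "(1/2::real) ^ 5 = 1/32"
      by (simp add: power_one_over)
    moreover have "remainder lev n j \<le> 1 / (real k + 3) + (1/2) ^ (j + 5)"
      using remainder_le_level(2)[OF \<open>N j \<le> n\<close> \<open>n < N (Suc j)\<close>, of lev] j(1) by simp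
    ultimately show ?thesis
      by linarith
  qed
  ultimately have "Re (torus_map (remainder lev n j)) \<le> cos (2 * pi * \<delta>)"
    using \<open>0 < \<delta>\<close> by (intro Re_torus_map_le_cos) auto
  moreover have "M \<le> n"
    using j(3) \<open>N j \<le> n\<close> strict_mono_imp_increasing[OF strict_mono_N, of j] by simp
  then have "cos (2 * pi * \<delta>) < Re (torus_map (of_int (u n) * point lev))"
    by (rule M)
  then have "cos (2 * pi * \<delta>) < Re (torus_map (remainder lev n j))"
    unfolding torus_map_mult_point[OF \<open>N j \<le> n\<close>] .
  ultimately show False
    by linarith
qed

end

lemma a_sequence_blocks_exist:
  assumes "a_sequence u" and unbounded: "\<forall>B::int. \<exists>n. \<bar>ratios u n\<bar> > B"
  obtains N where "a_sequence_blocks u N"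
proof -
  define P where "P j n \<longleftrightarrow> 2 \<le> n \<and> 2 ^ j \<le> ratios u n" for j n :: nat
  have "\<exists>n'. P (Suc j) n' \<and> n + j + 6 \<le> n'" for j n
  proof -
    obtain n' where n': "n + j + 6 \<le> n'" "2 ^ Suc j < \<bar>ratios u n'\<bar>"
      using unbounded_exists_beyond[OF unbounded] by blast
    have "0 < ratios u n'"
      using a_sequence_ratios_gt_1[OF assms(1), of "n' - 1"] n'(1) by simp
    with n' show ?thesis
      unfolding P_def by (intro exI[of _ n']) auto
  qed
  moreover have "P 0 2"
    using a_sequence_ratios_gt_1[OF assms(1), of 1] by (simp add: P_def numeral_2_eq_2)
  ultimately obtain N where N: "\<And>j. P j (N j) \<and> N j + j + 6 \<le> N (Suc j)"
    using dependent_nat_choice[of P "\<lambda>j n n'. n + j + 6 \<le> n'"] by blast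
  have N_Suc: "N j + j + 6 \<le> N (Suc j)" and N_ge: "2 \<le> N j" and ratios_ge: "2 ^ j \<le> ratios u (N j)" for j
    using N[of j] by (auto simp: P_def)
  have "N j < N (Suc j)" for j
    using N_Suc[of j] by linarith
  then have "strict_mono N"
    by (simp add: strict_mono_Suc_iff)
  have gap: "2 ^ (j + 4) * u (N j) \<le> u (N (Suc j) - 1)" for j
  proof -
    have "N j + (j + 4) \<le> N (Suc j) - 1"
      using N_Suc[of j] by linarith
    then have "u (N j + (j + 4)) \<le> u (N (Suc j) - 1)"
      using assms(1) unfolding a_sequence_def by (simp add: strict_mono_less_eq)
    moreover have "2 ^ (j + 4) * u (N j) \<le> u (N j + (j + 4))"
      using N_ge[of j] by (intro a_sequence_power_le[OF assms(1)]) simp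
    ultimately show ?thesis
      by linarith
  qed
  have "a_sequence_blocks u N"
    using assms(1) \<open>strict_mono N\<close> N_ge[of 0] ratios_ge gap by (rule a_sequence_blocks.intro)
  then show ?thesis ..
qed

theorem corollaryE:
  fixes u :: "nat \<Rightarrow> int"
  assumes "a_sequence u"
    and "\<forall>B::int. \<exists>n. \<bar>ratios u n\<bar> > B"
  shows "\<not> fsigma_in torus_top (s_u u)"
proof
  assume "fsigma_in torus_top (s_u u)"
  then obtain C :: "nat \<Rightarrow> complex set"
    where C: "\<And>k. closedin torus_top (C k)" and union: "\<Union> (range C) = s_u u"
    unfolding fsigma_in_ascending by blast
  obtain N where "a_sequence_blocks u N"
    using a_sequence_blocks_exist[OF assms] .
  then interpret a_sequence_blocks u N .
  have "\<Union> (range C) \<noteq> s_u u"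
  proof (rule Union_range_closed_neq[where \<Phi> = "\<lambda>f. torus_map (point f)"])
    show "closed (C k)" for k
      using C[of k, unfolded torus_top_def] closed_torus by (rule closedin_closed_trans)
    show "\<exists>m. \<forall>g. (\<forall>i\<le>m. g i = f i) \<longrightarrow> torus_map (point g) \<in> U"
      if "open U" "torus_map (point f) \<in> U" for f U
    proof -
      have "open (torus_map -` U)"
        using that(1) isCont_torus_map by (rule continuous_open_vimage)
      then show ?thesis
        using point_continuous[of "torus_map -` U" f] that(2) by simp
    qed
    show "torus_map (point f) \<in> s_u u" if "filterlim f at_top sequentially" for f
      using that by (rule torus_map_point_in_s_u)
    show "torus_map (point f) \<notin> s_u u" if "\<forall>\<^sub>F j in sequentially. f j = k" for f k
      using that by (rule torus_map_point_notin_s_u)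
  qed
  then show False
    using union by simp
qed

end
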